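(* Let $m,n,w,d$ be positive integers with $1\le w\le m-1$. For all positive integers $l$ dividing $n$, all integers $0\le v\le l$, and all integers $\delta$ with $0\le \delta\le \frac{n}{l}\min\{v,l-v\}$, $$A(m,n,w,d)\le \frac{1}{\alpha\left(l,\frac{n}{l},v,\delta\right)}\left(\frac{m^l}{w^v(m-w)^{l-v}}\right)^{\frac{n}{l}} A\left((m-1)l,\frac{n}{l},lw-v,d-\delta\right).$$
   Context: $J(m,w)$ denotes the set of binary vectors of length $m$ and Hamming weight $w$. Elements of $J(m,w)^n$ are identified with $m\times n$ binary matrices all of whose columns have weight $w$, with distance the binary Hamming distance. $A(m,n,w,d)$ denotes the maximum cardinality of a nonempty subset of $J(m,w)^n$ in which any two distinct elements are at Hamming distance at least $2d$ (for $d\le 0$ this is just $\binom{m}{w}^n$). $\alpha(m,n,w,\delta)$ denotes the maximum cardinality of a subset of $J(m,w)^n$ in which any two elements are at Hamming distance at most $2\delta$ (so $\alpha(m,n,w,0)=1$ and $\alpha(m,n,w,nw)=\binom{m}{w}^n$). *)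

theory Defs
  imports Complex_Main
begin

text \<open>Elements of J(m,w)^n: m x n binary matrices (entries indexed by row i < m and
column j < n, zero outside) all of whose columns have Hamming weight w.\<close>
definition cw_mats :: "nat \<Rightarrow> nat \<Rightarrow> nat \<Rightarrow> (nat \<Rightarrow> nat \<Rightarrow> bool) set" where
  "cw_mats m n w = {M. (\<forall>i j. M i j \<longrightarrow> i < m \<and> j < n) \<and>
                        (\<forall>j<n. card {i. i < m \<and> M i j} = w)}"

definition mat_hdist :: "nat \<Rightarrow> nat \<Rightarrow> (nat \<Rightarrow> nat \<Rightarrow> bool) \<Rightarrow> (nat \<Rightarrow> nat \<Rightarrow> bool) \<Rightarrow> nat" where
  "mat_hdist m n M N = card {(i, j). i < m \<and> j < n \<and> M i j \<noteq> N i j}"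

definition A_code :: "nat \<Rightarrow> nat \<Rightarrow> nat \<Rightarrow> int \<Rightarrow> nat" where
  "A_code m n w d = Max {card C | C. C \<subseteq> cw_mats m n w \<and> C \<noteq> {} \<and>
      (\<forall>x\<in>C. \<forall>y\<in>C. x \<noteq> y \<longrightarrow> 2 * d \<le> int (mat_hdist m n x y))}"

definition alpha_anticode :: "nat \<Rightarrow> nat \<Rightarrow> nat \<Rightarrow> nat \<Rightarrow> nat" where
  "alpha_anticode m n w \<delta> = Max {card C | C. C \<subseteq> cw_mats m n w \<and>
      (\<forall>x\<in>C. \<forall>y\<in>C. mat_hdist m n x y \<le> 2 * \<delta>)}"

end

theory Submission
  imports Defs "HOL-Library.FuncSet"
begin

text \<open>Double count over the m^n ways P of distinguishing one row in each column. Group the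
n columns into n/l blocks of l consecutive columns. The distinguished entries of a matrix x of
J(m,w)^n form an l \<times> n/l matrix (one column per block), and the remaining entries,
stacking the l shortened columns of a block into one column, form a matrix of
J((m-1)l, lw - v)^(n/l) whenever the distinguished part has column weights v; the Hamming
distance of x and y is the sum of the distances of the two parts. Take an optimal code C and an
optimal anticode B of diameter 2\<delta>. For fixed P, the codewords whose distinguished part
lies in B have punctured parts pairwise at distance at least 2(d - \<delta>), so there are at
most A((m-1)l, n/l, lw - v, d - \<delta>) of them. On the other hand, every pair (x, b) in C \<times> B
arises from exactly (w^v (m-w)^(l-v))^(n/l) choices of P.\<close>

lemma finite_cw_mats: "finite (cw_mats m n w)"
proof -
  have "cw_mats m n w \<subseteq> (\<lambda>S i j. (i, j) \<in> S) ` Pow ({..<m} \<times> {..<n})"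
  proof
    fix M assume "M \<in> cw_mats m n w"
    hence "M = (\<lambda>i j. (i, j) \<in> {(i, j). M i j})" and "{(i, j). M i j} \<subseteq> {..<m} \<times> {..<n}"
      by (auto simp: cw_mats_def)
    thus "M \<in> (\<lambda>S i j. (i, j) \<in> S) ` Pow ({..<m} \<times> {..<n})" by blast
  qed
  thus ?thesis by (rule finite_subset) auto
qed

lemma mat_hdist_eq_0_imp_eq:
  assumes "x \<in> cw_mats m n w" "y \<in> cw_mats m n w'" "mat_hdist m n x y = 0"
  shows "x = y"
proof (intro ext)
  fix i j
  have "finite {(i, j). i < m \<and> j < n \<and> x i j \<noteq> y i j}"
    by (rule finite_subset[of _ "{..<m} \<times> {..<n}"]) auto
  hence "{(i, j). i < m \<and> j < n \<and> x i j \<noteq> y i j} = {}"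
    using assms(3) by (simp add: mat_hdist_def)
  moreover have "\<not> (i < m \<and> j < n) \<Longrightarrow> \<not> x i j \<and> \<not> y i j"
    using assms(1,2) by (auto simp: cw_mats_def)
  ultimately show "x i j = y i j" by blast
qed

lemma const_block_in_cw_mats: "w \<le> m \<Longrightarrow> (\<lambda>i j. i < w \<and> j < n) \<in> cw_mats m n w"
proof -
  assume "w \<le> m"
  hence "\<And>j. j < n \<Longrightarrow> {i. i < m \<and> i < w \<and> j < n} = {..<w}" by auto
  thus ?thesis using \<open>w \<le> m\<close> unfolding cw_mats_def by auto
qed

lemma finite_card_Collect_subset: "finite X \<Longrightarrow> finite {card C | C. C \<subseteq> X \<and> Q C}"
  by (rule finite_subset[of _ "card ` Pow X"]) auto

lemma card_le_A_code:
  assumes "C \<subseteq> cw_mats m n w" "C \<noteq> {}"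
    and "\<forall>x\<in>C. \<forall>y\<in>C. x \<noteq> y \<longrightarrow> 2 * d \<le> int (mat_hdist m n x y)"
  shows "card C \<le> A_code m n w d"
  unfolding A_code_def
  by (rule Max_ge, rule finite_card_Collect_subset[OF finite_cw_mats]) (use assms in blast)

lemma A_code_attained:
  assumes "w \<le> m"
  obtains C where "card C = A_code m n w d" "C \<subseteq> cw_mats m n w"
    "\<forall>x\<in>C. \<forall>y\<in>C. x \<noteq> y \<longrightarrow> 2 * d \<le> int (mat_hdist m n x y)"
proof -
  let ?S = "{card C | C. C \<subseteq> cw_mats m n w \<and> C \<noteq> {} \<and>
      (\<forall>x\<in>C. \<forall>y\<in>C. x \<noteq> y \<longrightarrow> 2 * d \<le> int (mat_hdist m n x y))}"
  have "card {\<lambda>i j. i < w \<and> j < n} \<in> ?S"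
    using const_block_in_cw_mats[OF assms, of n] by blast
  hence "A_code m n w d \<in> ?S"
    unfolding A_code_def by (intro Max_in finite_card_Collect_subset finite_cw_mats) blast
  then obtain C where "A_code m n w d = card C" "C \<subseteq> cw_mats m n w"
    "\<forall>x\<in>C. \<forall>y\<in>C. x \<noteq> y \<longrightarrow> 2 * d \<le> int (mat_hdist m n x y)"
    by blast
  thus ?thesis using that by simp
qed

lemma card_le_alpha_anticode:
  assumes "B \<subseteq> cw_mats l k v" "\<forall>x\<in>B. \<forall>y\<in>B. mat_hdist l k x y \<le> 2 * \<delta>"
  shows "card B \<le> alpha_anticode l k v \<delta>"
  unfolding alpha_anticode_def
  by (rule Max_ge, rule finite_card_Collect_subset[OF finite_cw_mats]) (use assms in blast)

lemma alpha_anticode_pos: "v \<le> l \<Longrightarrow> 0 < alpha_anticode l k v \<delta>"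
  using card_le_alpha_anticode[of "{\<lambda>i j. i < v \<and> j < k}" l k v \<delta>] const_block_in_cw_mats[of v l k]
  by (simp add: mat_hdist_def)

text \<open>The empty anticode is admitted in the definition, so the maximum is always attained.\<close>

lemma alpha_anticode_attained:
  obtains B where "card B = alpha_anticode l k v \<delta>" "B \<subseteq> cw_mats l k v"
    "\<forall>x\<in>B. \<forall>y\<in>B. mat_hdist l k x y \<le> 2 * \<delta>"
proof -
  let ?S = "{card B | B. B \<subseteq> cw_mats l k v \<and> (\<forall>x\<in>B. \<forall>y\<in>B. mat_hdist l k x y \<le> 2 * \<delta>)}"
  have "card {} \<in> ?S" by (intro CollectI exI[of _ "{}"]) simp
  hence "alpha_anticode l k v \<delta> \<in> ?S"
    unfolding alpha_anticode_def by (intro Max_in finite_card_Collect_subset finite_cw_mats) blast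
  then obtain B where "alpha_anticode l k v \<delta> = card B" "B \<subseteq> cw_mats l k v"
    "\<forall>x\<in>B. \<forall>y\<in>B. mat_hdist l k x y \<le> 2 * \<delta>"
    by blast
  thus ?thesis using that by simp
qed

definition skip_index :: "nat \<Rightarrow> nat \<Rightarrow> nat" where
  "skip_index p s = (if s < p then s else Suc s)"

lemma inj_skip_index: "inj (skip_index p)"
  by (auto simp: inj_def skip_index_def split: if_splits)

lemma skip_index_image: "p < m \<Longrightarrow> skip_index p ` {..<m - 1} = {..<m} - {p}"
proof (intro equalityI subsetI)
  fix i assume "p < m" "i \<in> {..<m} - {p}"
  hence "skip_index p (if i < p then i else i - 1) = i" "(if i < p then i else i - 1) < m - 1"
    by (auto simp: skip_index_def)
  thus "i \<in> skip_index p ` {..<m - 1}" by force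
qed (auto simp: skip_index_def)

lemma card_column_skip_index:
  assumes "p < m"
  shows "card {i. i < m \<and> x i} = card {s. s < m - 1 \<and> x (skip_index p s)} + of_bool (x p)"
proof -
  let ?S = "{s. s < m - 1 \<and> x (skip_index p s)}"
  have "{i. i < m \<and> x i} = ({..<m} - {p}) \<inter> {i. x i} \<union> {i. i = p \<and> x p}"
    using assms by auto
  also have "({..<m} - {p}) \<inter> {i. x i} = skip_index p ` ?S"
    unfolding skip_index_image[OF assms, symmetric] by auto
  finally have "{i. i < m \<and> x i} = skip_index p ` ?S \<union> {i. i = p \<and> x p}" .
  moreover have "card (skip_index p ` ?S) = card ?S"
    using inj_skip_index by (rule card_image[OF inj_on_subset]) simp
  moreover have "skip_index p ` ?S \<inter> {i. i = p \<and> x p} = {}" by (auto simp: skip_index_def)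
  ultimately show ?thesis by (simp add: card_Un_disjoint)
qed

lemma block_index_less:
  fixes c t k l :: nat
  assumes "c < k" "t < l"
  shows "c * l + t < k * l"
proof -
  have "c * l + t < (c + 1) * l" using assms by simp
  also have "\<dots> \<le> k * l" using assms by (intro mult_le_mono1) simp
  finally show ?thesis .
qed

lemma block_index_eq_iff:
  fixes c t c' t' l :: nat
  assumes "t < l" "t' < l"
  shows "c * l + t = c' * l + t' \<longleftrightarrow> c = c' \<and> t = t'"
proof
  assume eq: "c * l + t = c' * l + t'"
  have "(c * l + t) div l = (c' * l + t') div l" "(c * l + t) mod l = (c' * l + t') mod l"
    using eq by simp_all
  thus "c = c' \<and> t = t'" using assms by simp
qed simp

lemma block_index_bounds:
  fixes j k l :: nat
  assumes "j < k * l"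
  shows "j div l < k" "j mod l < l"
proof -
  have "0 < l" using assms by (cases l) auto
  thus "j div l < k" "j mod l < l" using assms by (simp_all add: less_mult_imp_div_less)
qed

lemma card_div_mod_blocks:
  fixes a l :: nat
  assumes "0 < a"
  shows "card {r. r < a * l \<and> Q (r div a) (r mod a)} = (\<Sum>t<l. card {s. s < a \<and> Q t s})"
proof -
  have "{r. r < a * l \<and> Q (r div a) (r mod a)} =
      (\<lambda>(t, s). t * a + s) ` Sigma {..<l} (\<lambda>t. {s. s < a \<and> Q t s})"
  proof (intro equalityI subsetI)
    fix r assume "r \<in> {r. r < a * l \<and> Q (r div a) (r mod a)}"
    hence "r div a < l" "r mod a < a" "Q (r div a) (r mod a)" "r = r div a * a + r mod a"
      using assms by (auto simp: less_mult_imp_div_less mult.commute)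
    thus "r \<in> (\<lambda>(t, s). t * a + s) ` Sigma {..<l} (\<lambda>t. {s. s < a \<and> Q t s})" by force
  next
    fix r assume "r \<in> (\<lambda>(t, s). t * a + s) ` Sigma {..<l} (\<lambda>t. {s. s < a \<and> Q t s})"
    then obtain t s where "r = t * a + s" "t < l" "s < a" "Q t s" by auto
    thus "r \<in> {r. r < a * l \<and> Q (r div a) (r mod a)}"
      using block_index_less[of t l s a] by (simp add: mult.commute)
  qed
  moreover have "inj_on (\<lambda>(t, s). t * a + s) (Sigma {..<l} (\<lambda>t. {s. s < a \<and> Q t s}))"
    by (rule inj_onI) (clarsimp simp: block_index_eq_iff)
  ultimately show ?thesis by (simp add: card_image)
qed

subsection \<open>Splitting a matrix along a choice of rows\<close>

text \<open>A choice P of one row P j < m in each column j < k l; column j = c l + t is column t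
of block c. The pattern collects the chosen entries, block c becoming column c; the punctured
matrix deletes them and stacks the l shortened columns of block c into column c, its row
t (m-1) + s holding entry s of the shortened column t.\<close>

definition pattern :: "nat \<Rightarrow> nat \<Rightarrow> (nat \<Rightarrow> nat) \<Rightarrow> (nat \<Rightarrow> nat \<Rightarrow> bool) \<Rightarrow> nat \<Rightarrow> nat \<Rightarrow> bool" where
  "pattern l k P x = (\<lambda>t c. t < l \<and> c < k \<and> x (P (c * l + t)) (c * l + t))"

definition punctured ::
    "nat \<Rightarrow> nat \<Rightarrow> nat \<Rightarrow> (nat \<Rightarrow> nat) \<Rightarrow> (nat \<Rightarrow> nat \<Rightarrow> bool) \<Rightarrow> nat \<Rightarrow> nat \<Rightarrow> bool" where
  "punctured m l k P x = (\<lambda>r c. r < (m - 1) * l \<and> c < k \<and>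
      x (skip_index (P (c * l + r div (m - 1))) (r mod (m - 1))) (c * l + r div (m - 1)))"

lemma punctured_entry:
  assumes "t < l" "c < k" "s < m - 1"
  shows "punctured m l k P x (t * (m - 1) + s) c = x (skip_index (P (c * l + t)) s) (c * l + t)"
proof -
  have "t * (m - 1) + s < (m - 1) * l"
    using block_index_less[OF assms(1,3)] by (simp add: mult.commute)
  moreover have "(t * (m - 1) + s) div (m - 1) = t" "(t * (m - 1) + s) mod (m - 1) = s"
    using assms(3) by simp_all
  ultimately show ?thesis using assms(2) by (simp add: punctured_def)
qed

lemma punctured_in_cw_mats:
  assumes x: "x \<in> cw_mats m (k * l) w" and m: "1 < m"
    and P: "\<forall>j < k * l. P j < m" and pat: "pattern l k P x \<in> cw_mats l k v"
  shows "punctured m l k P x \<in> cw_mats ((m - 1) * l) k (l * w - v)"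
  unfolding cw_mats_def mem_Collect_eq
proof (intro conjI allI impI)
  fix c assume c: "c < k"
  let ?Q = "\<lambda>t s. x (skip_index (P (c * l + t)) s) (c * l + t)"
  let ?chosen = "\<lambda>t. of_bool (x (P (c * l + t)) (c * l + t)) :: nat"
  have "card {r. r < (m - 1) * l \<and> punctured m l k P x r c} =
      card {r. r < (m - 1) * l \<and> ?Q (r div (m - 1)) (r mod (m - 1))}"
    using c by (intro arg_cong[where f = card]) (auto simp: punctured_def)
  also have "\<dots> = (\<Sum>t<l. card {s. s < m - 1 \<and> ?Q t s})"
    by (rule card_div_mod_blocks) (use m in simp)
  finally have blocks: "card {r. r < (m - 1) * l \<and> punctured m l k P x r c} =
      (\<Sum>t<l. card {s. s < m - 1 \<and> ?Q t s})" .
  have column: "card {s. s < m - 1 \<and> ?Q t s} + ?chosen t = w" if t: "t < l" for t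
  proof -
    have j: "c * l + t < k * l" using block_index_less[OF c t] .
    hence "w = card {i. i < m \<and> x i (c * l + t)}" using x by (simp add: cw_mats_def)
    also have "\<dots> = card {s. s < m - 1 \<and> ?Q t s} + ?chosen t"
      using P j by (intro card_column_skip_index) simp
    finally show ?thesis by simp
  qed
  have "(\<Sum>t<l. card {s. s < m - 1 \<and> ?Q t s} + ?chosen t) = (\<Sum>t<l. w)"
    using column by (intro sum.cong) auto
  hence "(\<Sum>t<l. card {s. s < m - 1 \<and> ?Q t s}) + (\<Sum>t<l. ?chosen t) = l * w"
    by (simp add: sum.distrib)
  moreover have "(\<Sum>t<l. ?chosen t) = card {t. t < l \<and> pattern l k P x t c}"
    using c by (simp add: pattern_def Int_def conj_commute)
  moreover have "card {t. t < l \<and> pattern l k P x t c} = v"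
    using pat c by (simp add: cw_mats_def)
  ultimately show "card {r. r < (m - 1) * l \<and> punctured m l k P x r c} = l * w - v"
    using blocks by simp
qed (simp_all add: punctured_def)

lemma card_diffs_at_chosen_rows:
  assumes P: "\<forall>j < k * l. P j < m"
  shows "card {(i, j). i < m \<and> j < k * l \<and> x i j \<noteq> y i j \<and> i = P j} =
    mat_hdist l k (pattern l k P x) (pattern l k P y)"
proof -
  let ?D = "{(i, j). i < m \<and> j < k * l \<and> x i j \<noteq> y i j \<and> i = P j}"
  let ?T = "{(t, c). t < l \<and> c < k \<and> pattern l k P x t c \<noteq> pattern l k P y t c}"
  let ?g = "\<lambda>(t, c). (P (c * l + t), c * l + t)"
  have "inj_on ?g ?T" by (rule inj_onI) (clarsimp simp: block_index_eq_iff)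
  moreover have "?g ` ?T = ?D"
  proof (intro equalityI subsetI)
    fix z assume "z \<in> ?g ` ?T"
    then obtain t c where "z = ?g (t, c)" "t < l" "c < k"
      "pattern l k P x t c \<noteq> pattern l k P y t c" by auto
    thus "z \<in> ?D" using P block_index_less[of c k t l] by (auto simp: pattern_def)
  next
    fix z assume "z \<in> ?D"
    then obtain j where z: "z = (P j, j)" "j < k * l" "x (P j) j \<noteq> y (P j) j" by auto
    hence "(j mod l, j div l) \<in> ?T" "?g (j mod l, j div l) = z"
      using block_index_bounds[OF z(2)] by (auto simp: pattern_def)
    thus "z \<in> ?g ` ?T" by force
  qed
  ultimately have "card ?D = card ?T" using card_image by fastforce
  thus ?thesis by (simp only: mat_hdist_def)
qed

lemma card_diffs_off_chosen_rows:
  assumes m: "1 < m" and P: "\<forall>j < k * l. P j < m"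
  shows "card {(i, j). i < m \<and> j < k * l \<and> x i j \<noteq> y i j \<and> i \<noteq> P j} =
    mat_hdist ((m - 1) * l) k (punctured m l k P x) (punctured m l k P y)"
proof -
  define a where "a = m - 1"
  have a: "0 < a" using m by (simp add: a_def)
  let ?D = "{(i, j). i < m \<and> j < k * l \<and> x i j \<noteq> y i j \<and> i \<noteq> P j}"
  let ?R = "{(r, c). r < a * l \<and> c < k \<and> punctured m l k P x r c \<noteq> punctured m l k P y r c}"
  let ?g = "\<lambda>(r, c). (skip_index (P (c * l + r div a)) (r mod a), c * l + r div a)"
  have row: "r div a < l" if "r < a * l" for r
    using that by (simp add: less_mult_imp_div_less mult.commute)
  have inj: "inj_on ?g ?R"
  proof (rule inj_onI)
    fix p p' assume R: "p \<in> ?R" "p' \<in> ?R" and eq: "?g p = ?g p'"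
    obtain r c r' c' where p: "p = (r, c)" "p' = (r', c')" by fastforce
    have "c * l + r div a = c' * l + r' div a" using eq by (simp add: p)
    hence c: "c = c' \<and> r div a = r' div a" using R by (simp add: p block_index_eq_iff row)
    hence "r mod a = r' mod a" using eq by (simp add: p inj_eq[OF inj_skip_index])
    thus "p = p'" using c p by (metis div_mult_mod_eq)
  qed
  have img: "?g ` ?R = ?D"
  proof (intro equalityI subsetI)
    fix z assume "z \<in> ?g ` ?R"
    then obtain r c where z: "z = ?g (r, c)" "r < a * l" "c < k"
      "punctured m l k P x r c \<noteq> punctured m l k P y r c" by auto
    define j where "j = c * l + r div a"
    have j: "j < k * l" using block_index_less[OF z(3) row[OF z(2)]] by (simp add: j_def)
    have "r mod a \<in> {..<m - 1}" using a by (simp add: a_def)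
    hence "skip_index (P j) (r mod a) \<in> {..<m} - {P j}"
      using skip_index_image[of "P j" m] P j by blast
    moreover have "x (skip_index (P j) (r mod a)) j \<noteq> y (skip_index (P j) (r mod a)) j"
      using z(2-4) by (simp add: punctured_def a_def j_def)
    ultimately show "z \<in> ?D" using z(1) j by (simp add: j_def)
  next
    fix z assume "z \<in> ?D"
    then obtain i j where z: "z = (i, j)" "i < m" "j < k * l" "x i j \<noteq> y i j" "i \<noteq> P j"
      by auto
    hence "i \<in> skip_index (P j) ` {..<m - 1}" using skip_index_image[of "P j" m] P by blast
    then obtain s where s: "s < a" "skip_index (P j) s = i" by (auto simp: a_def)
    note t = block_index_bounds[OF z(3)]
    have "j mod l * a + s < a * l"
      using block_index_less[OF t(2) s(1)] by (simp add: mult.commute)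
    moreover have "punctured m l k P u (j mod l * a + s) (j div l) = u i j" for u
      using punctured_entry[OF t(2,1), of s m P u] s by (simp add: a_def)
    ultimately have "(j mod l * a + s, j div l) \<in> ?R" using z(4) t by simp
    moreover have "z = ?g (j mod l * a + s, j div l)" using z s a by simp
    ultimately show "z \<in> ?g ` ?R" by (rule rev_image_eqI)
  qed
  have "card ?D = card ?R" by (simp only: img[symmetric] card_image[OF inj])
  thus ?thesis by (simp only: mat_hdist_def a_def)
qed

lemma mat_hdist_split:
  assumes "1 < m" "\<forall>j < k * l. P j < m"
  shows "mat_hdist m (k * l) x y =
    mat_hdist ((m - 1) * l) k (punctured m l k P x) (punctured m l k P y) +
    mat_hdist l k (pattern l k P x) (pattern l k P y)"
proof -
  let ?off = "{(i, j). i < m \<and> j < k * l \<and> x i j \<noteq> y i j \<and> i \<noteq> P j}"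
  let ?at = "{(i, j). i < m \<and> j < k * l \<and> x i j \<noteq> y i j \<and> i = P j}"
  have fin: "finite ?off" "finite ?at"
    by (rule finite_subset[of _ "{..<m} \<times> {..<k * l}"], auto)+
  have "{(i, j). i < m \<and> j < k * l \<and> x i j \<noteq> y i j} = ?off \<union> ?at" by auto
  moreover have "card (?off \<union> ?at) = card ?off + card ?at"
    by (rule card_Un_disjoint[OF fin]) auto
  ultimately have "mat_hdist m (k * l) x y = card ?off + card ?at"
    by (simp only: mat_hdist_def)
  thus ?thesis
    using card_diffs_at_chosen_rows[OF assms(2)] card_diffs_off_chosen_rows[OF assms] by simp
qed

text \<open>The chosen entry of a column is recovered from the others through the column weight.\<close>

lemma punctured_inj:
  assumes m: "1 < m" and P: "\<forall>j < k * l. P j < m"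
  shows "inj_on (punctured m l k P) (cw_mats m (k * l) w)"
proof (rule inj_onI)
  fix x y
  assume x: "x \<in> cw_mats m (k * l) w" and y: "y \<in> cw_mats m (k * l) w"
    and eq: "punctured m l k P x = punctured m l k P y"
  have "pattern l k P x t c = pattern l k P y t c" if tc: "t < l" "c < k" for t c
  proof -
    define j where "j = c * l + t"
    have j: "j < k * l" using block_index_less[OF tc(2,1)] by (simp add: j_def)
    have "x (skip_index (P j) s) j = y (skip_index (P j) s) j" if "s < m - 1" for s
      using punctured_entry[OF tc that, of P x] punctured_entry[OF tc that, of P y] eq
      by (simp add: j_def)
    hence same: "{s. s < m - 1 \<and> x (skip_index (P j) s) j} = {s. s < m - 1 \<and> y (skip_index (P j) s) j}"
      by auto
    have col: "card {s. s < m - 1 \<and> z (skip_index (P j) s) j} + of_bool (z (P j) j) = w"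
      if "z \<in> cw_mats m (k * l) w" for z
      using card_column_skip_index[of "P j" m "\<lambda>i. z i j"] P j that by (simp add: cw_mats_def)
    have "(of_bool (x (P j) j) :: nat) = of_bool (y (P j) j)"
      using col[OF x] col[OF y] unfolding same by simp
    hence "x (P j) j = y (P j) j" by (cases "x (P j) j"; cases "y (P j) j") simp_all
    thus ?thesis by (simp add: pattern_def j_def)
  qed
  hence "pattern l k P x = pattern l k P y" by (auto simp: pattern_def)
  hence "mat_hdist m (k * l) x y = 0"
    using mat_hdist_split[OF m P, of x y] eq by (simp add: mat_hdist_def)
  thus "x = y" using mat_hdist_eq_0_imp_eq x y by blast
qed

subsection \<open>Double counting\<close>

lemma card_column_entries_eq:
  assumes "x \<in> cw_mats m n w" "j < n"
  shows "card {p. p < m \<and> x p j = b} = (if b then w else m - w)"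
proof -
  have cw: "card {p. p < m \<and> x p j} = w" using assms by (simp add: cw_mats_def)
  have "{p. p < m \<and> \<not> x p j} = {..<m} - {p. p < m \<and> x p j}" by auto
  also have "card \<dots> = m - w" using cw by (subst card_Diff_subset) auto
  finally show ?thesis using cw by (cases b) simp_all
qed

lemma choices_with_pattern_eq_PiE:
  assumes "b \<in> cw_mats l k v"
  shows "{P \<in> {..<k * l} \<rightarrow>\<^sub>E {..<m}. pattern l k P x = b} =
    (\<Pi>\<^sub>E j\<in>{..<k * l}. {p. p < m \<and> x p j = b (j mod l) (j div l)})"
proof (intro equalityI subsetI)
  fix P assume P: "P \<in> {P \<in> {..<k * l} \<rightarrow>\<^sub>E {..<m}. pattern l k P x = b}"
  have "x (P j) j = b (j mod l) (j div l)" if j: "j < k * l" for j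
  proof -
    have "pattern l k P x (j mod l) (j div l) = x (P j) j"
      using block_index_bounds[OF j] by (simp add: pattern_def)
    thus ?thesis using P by simp
  qed
  thus "P \<in> (\<Pi>\<^sub>E j\<in>{..<k * l}. {p. p < m \<and> x p j = b (j mod l) (j div l)})"
    using P by (auto simp: PiE_iff)
next
  fix P assume P: "P \<in> (\<Pi>\<^sub>E j\<in>{..<k * l}. {p. p < m \<and> x p j = b (j mod l) (j div l)})"
  have "pattern l k P x t c = b t c" for t c
    using P assms block_index_less[of c k t l]
    by (cases "t < l \<and> c < k") (auto simp: PiE_iff pattern_def cw_mats_def)
  thus "P \<in> {P \<in> {..<k * l} \<rightarrow>\<^sub>E {..<m}. pattern l k P x = b}" using P by (auto simp: PiE_iff)
qed

lemma card_choices_with_pattern: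
  assumes x: "x \<in> cw_mats m (k * l) w" and b: "b \<in> cw_mats l k v" and l: "0 < l"
  shows "card {P \<in> {..<k * l} \<rightarrow>\<^sub>E {..<m}. pattern l k P x = b} = w^(k * v) * (m - w)^(k * (l - v))"
proof -
  let ?J = "{j. j < k * l \<and> b (j mod l) (j div l)}"
  have J: "card ?J = k * v"
  proof -
    have "card ?J = (\<Sum>c<k. card {t. t < l \<and> b t c})"
      using card_div_mod_blocks[OF l, of k "\<lambda>c t. b t c"] by (simp add: mult.commute)
    also have "\<dots> = k * v" using b by (simp add: cw_mats_def)
    finally show ?thesis .
  qed
  have "card {P \<in> {..<k * l} \<rightarrow>\<^sub>E {..<m}. pattern l k P x = b} =
      (\<Prod>j<k * l. if b (j mod l) (j div l) then w else m - w)"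
    unfolding choices_with_pattern_eq_PiE[OF b] card_PiE[OF finite_lessThan]
    by (intro prod.cong refl) (simp add: card_column_entries_eq[OF x])
  also have "\<dots> = w ^ card ?J * (m - w) ^ card {j. j < k * l \<and> \<not> b (j mod l) (j div l)}"
    by (simp add: prod.If_cases Int_def conj_commute)
  also have "{j. j < k * l \<and> \<not> b (j mod l) (j div l)} = {..<k * l} - ?J" by auto
  also have "card \<dots> = k * l - card ?J" by (subst card_Diff_subset) auto
  finally show ?thesis using J by (simp add: diff_mult_distrib2 mult.commute)
qed

lemma card_code_with_pattern_in_anticode_le:
  assumes C: "C \<subseteq> cw_mats m (k * l) w"
    and Cd: "\<forall>x\<in>C. \<forall>y\<in>C. x \<noteq> y \<longrightarrow> 2 * int d \<le> int (mat_hdist m (k * l) x y)"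
    and B: "B \<subseteq> cw_mats l k v" and Bd: "\<forall>x\<in>B. \<forall>y\<in>B. mat_hdist l k x y \<le> 2 * \<delta>"
    and m: "1 < m" and P: "\<forall>j < k * l. P j < m"
  shows "card {x\<in>C. pattern l k P x \<in> B} \<le> A_code ((m - 1) * l) k (l * w - v) (int d - int \<delta>)"
proof (cases "{x\<in>C. pattern l k P x \<in> B} = {}")
  case True
  thus ?thesis by (simp only: card.empty zero_le)
next
  case False
  let ?S = "{x\<in>C. pattern l k P x \<in> B}"
  have "card ?S = card (punctured m l k P ` ?S)"
    using C by (intro card_image[symmetric] inj_on_subset[OF punctured_inj[OF m P]]) auto
  also have "\<dots> \<le> A_code ((m - 1) * l) k (l * w - v) (int d - int \<delta>)"
  proof (rule card_le_A_code)
    show "punctured m l k P ` ?S \<subseteq> cw_mats ((m - 1) * l) k (l * w - v)"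
      using C B punctured_in_cw_mats[OF _ m P] by blast
    show "\<forall>u\<in>punctured m l k P ` ?S. \<forall>u'\<in>punctured m l k P ` ?S. u \<noteq> u' \<longrightarrow>
        2 * (int d - int \<delta>) \<le> int (mat_hdist ((m - 1) * l) k u u')"
    proof (intro ballI impI)
      fix u u' assume "u \<in> punctured m l k P ` ?S" "u' \<in> punctured m l k P ` ?S" "u \<noteq> u'"
      then obtain x y where xy: "x \<in> ?S" "y \<in> ?S" "x \<noteq> y"
        "u = punctured m l k P x" "u' = punctured m l k P y" by blast
      hence "2 * int d \<le> int (mat_hdist m (k * l) x y)"
        and "mat_hdist l k (pattern l k P x) (pattern l k P y) \<le> 2 * \<delta>"
        using Cd Bd by simp_all
      thus "2 * (int d - int \<delta>) \<le> int (mat_hdist ((m - 1) * l) k u u')"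
        using mat_hdist_split[OF m P, of x y] xy(4,5) by simp
    qed
  qed (use False in blast)
  finally show ?thesis .
qed

lemma code_anticode_double_counting:
  assumes C: "C \<subseteq> cw_mats m (k * l) w"
    and Cd: "\<forall>x\<in>C. \<forall>y\<in>C. x \<noteq> y \<longrightarrow> 2 * int d \<le> int (mat_hdist m (k * l) x y)"
    and B: "B \<subseteq> cw_mats l k v" and Bd: "\<forall>x\<in>B. \<forall>y\<in>B. mat_hdist l k x y \<le> 2 * \<delta>"
    and m: "1 < m" and l: "0 < l"
  shows "card C * card B * (w^(k * v) * (m - w)^(k * (l - v))) \<le>
    m^(k * l) * A_code ((m - 1) * l) k (l * w - v) (int d - int \<delta>)"
proof -
  let ?Ps = "{..<k * l} \<rightarrow>\<^sub>E {..<m}"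
  have fin: "finite C" "finite B" "finite ?Ps"
    using C B finite_subset finite_cw_mats by (blast, blast, simp add: finite_PiE)
  let ?W = "w^(k * v) * (m - w)^(k * (l - v))"
  have "card C * card B * ?W = (\<Sum>x\<in>C. \<Sum>b\<in>B. ?W)" by simp
  also have "\<dots> = (\<Sum>x\<in>C. \<Sum>b\<in>B. card {P \<in> ?Ps. pattern l k P x = b})"
  proof (intro sum.cong refl)
    fix x b assume "x \<in> C" "b \<in> B"
    thus "?W = card {P \<in> ?Ps. pattern l k P x = b}"
      using card_choices_with_pattern[OF subsetD[OF C] subsetD[OF B] l] by simp
  qed
  also have "\<dots> = (\<Sum>x\<in>C. \<Sum>b\<in>B. \<Sum>P\<in>?Ps. of_bool (pattern l k P x = b))"
    using fin(3) by (simp add: Int_def conj_commute)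
  also have "\<dots> = (\<Sum>x\<in>C. \<Sum>P\<in>?Ps. \<Sum>b\<in>B. of_bool (pattern l k P x = b))"
    by (intro sum.cong refl sum.swap)
  also have "\<dots> = (\<Sum>P\<in>?Ps. \<Sum>x\<in>C. \<Sum>b\<in>B. of_bool (pattern l k P x = b))"
    by (rule sum.swap)
  also have "\<dots> = (\<Sum>P\<in>?Ps. card {x\<in>C. pattern l k P x \<in> B})"
  proof -
    have "(\<Sum>b\<in>B. of_bool (pattern l k P x = b)) = (of_bool (pattern l k P x \<in> B) :: nat)"
      for P x using fin(2) by simp
    thus ?thesis using fin(1) by (simp add: Int_def conj_commute)
  qed
  also have "\<dots> \<le> (\<Sum>P\<in>?Ps. A_code ((m - 1) * l) k (l * w - v) (int d - int \<delta>))"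
    by (intro sum_mono card_code_with_pattern_in_anticode_le[OF C Cd B Bd m]) auto
  also have "\<dots> = m^(k * l) * A_code ((m - 1) * l) k (l * w - v) (int d - int \<delta>)"
    by (simp add: card_PiE)
  finally show ?thesis .
qed

lemma A_code_mul_alpha_anticode_le:
  assumes "1 < m" "w \<le> m" "0 < l"
  shows "A_code m (k * l) w (int d) * alpha_anticode l k v \<delta> * (w^(k * v) * (m - w)^(k * (l - v))) \<le>
    m^(k * l) * A_code ((m - 1) * l) k (l * w - v) (int d - int \<delta>)"
proof -
  obtain C where C: "card C = A_code m (k * l) w (int d)" "C \<subseteq> cw_mats m (k * l) w"
    "\<forall>x\<in>C. \<forall>y\<in>C. x \<noteq> y \<longrightarrow> 2 * int d \<le> int (mat_hdist m (k * l) x y)"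
    using A_code_attained[OF assms(2)] .
  obtain B where B: "card B = alpha_anticode l k v \<delta>" "B \<subseteq> cw_mats l k v"
    "\<forall>x\<in>B. \<forall>y\<in>B. mat_hdist l k x y \<le> 2 * \<delta>"
    using alpha_anticode_attained .
  show ?thesis
    using code_anticode_double_counting[OF C(2,3) B(2,3) assms(1,3)] unfolding C(1) B(1) .
qed

theorem proposition3:
  fixes m n w d l v \<delta> :: nat
  assumes "0 < m" "0 < n" "0 < d" "1 \<le> w" "w \<le> m - 1"
    and "0 < l" "l dvd n" "v \<le> l"
    and "\<delta> \<le> (n div l) * min v (l - v)"
  shows "real (A_code m n w (int d)) \<le>
     (1 / real (alpha_anticode l (n div l) v \<delta>)) *
     (real m ^ l / (real w ^ v * real (m - w) ^ (l - v))) ^ (n div l) *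
     real (A_code ((m - 1) * l) (n div l) (l * w - v) (int d - int \<delta>))"
proof -
  define k where "k = n div l"
  define A where "A = real (A_code m n w (int d))"
  define \<alpha> where "\<alpha> = real (alpha_anticode l k v \<delta>)"
  define A' where "A' = real (A_code ((m - 1) * l) k (l * w - v) (int d - int \<delta>))"
  define q where "q = real w ^ v * real (m - w) ^ (l - v)"
  have n: "n = k * l" using assms(7) by (simp add: k_def)
  have m: "1 < m" "w \<le> m" and q: "0 < q" using assms(4,5) by (auto simp: q_def)
  have W: "real (w ^ (k * v)) * real ((m - w) ^ (k * (l - v))) = q ^ k"
    by (simp add: q_def power_mult_distrib power_mult[symmetric] mult.commute)
  have M: "real (m ^ n) = (real m ^ l) ^ k" by (simp add: n power_mult[symmetric] mult.commute)
  have "A * \<alpha> * q ^ k \<le> (real m ^ l) ^ k * A'"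
    using of_nat_mono[where 'a = real, OF A_code_mul_alpha_anticode_le[OF m assms(6), of k d v \<delta>]]
    unfolding A_def \<alpha>_def A'_def n[symmetric] of_nat_mult W M .
  moreover have "0 < \<alpha>" using alpha_anticode_pos[OF assms(8)] by (simp add: \<alpha>_def)
  ultimately have "A \<le> (real m ^ l) ^ k * A' / (\<alpha> * q ^ k)"
    using q by (simp add: pos_le_divide_eq mult.commute mult.left_commute)
  also have "\<dots> = 1 / \<alpha> * (real m ^ l / q) ^ k * A'"
    by (simp add: power_divide)
  finally show ?thesis by (simp add: A_def \<alpha>_def A'_def q_def k_def)
qed

end
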